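(* Consider the type with a single binary operation, and let $\mathcal{CG}$ be the variety of commutative groupoids (defined by $xy=yx$). Then every algebra in the Mal'tsev product $\mathcal{CG}\circ\mathcal{S}$ satisfies the quasi-identity $$(zx=x\ \&\ zy=y\ \&\ xz=yz)\ \rightarrow\ (xy=yx).$$
   Context: $\mathcal{S}$ is the variety of semilattices (in this type, the groupoids satisfying all identities with the same variables on both sides). $\mathcal{CG}\circ\mathcal{S}$ is the class of all groupoids $A$ having a congruence $\theta$ such that $A/\theta$ is a semilattice and every $\theta$-class (a subgroupoid) is commutative. *)

theory Defs
  imports Main
begin

text \<open>A groupoid is a type 'a with a binary operation m (the whole type is the carrier).\<close>

definition groupoid_congruence :: "('a \<Rightarrow> 'a \<Rightarrow> 'a) \<Rightarrow> ('a \<times> 'a) set \<Rightarrow> bool" where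
  "groupoid_congruence m \<theta> \<longleftrightarrow> equiv UNIV \<theta> \<and>
     (\<forall>a b c d. (a, b) \<in> \<theta> \<and> (c, d) \<in> \<theta> \<longrightarrow> (m a c, m b d) \<in> \<theta>)"

definition quotient_is_semilattice :: "('a \<Rightarrow> 'a \<Rightarrow> 'a) \<Rightarrow> ('a \<times> 'a) set \<Rightarrow> bool" where
  "quotient_is_semilattice m \<theta> \<longleftrightarrow>
     (\<forall>x y z. (m (m x y) z, m x (m y z)) \<in> \<theta>) \<and>
     (\<forall>x y. (m x y, m y x) \<in> \<theta>) \<and>
     (\<forall>x. (m x x, x) \<in> \<theta>)"

definition classes_commutative_subgroupoids :: "('a \<Rightarrow> 'a \<Rightarrow> 'a) \<Rightarrow> ('a \<times> 'a) set \<Rightarrow> bool" where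
  "classes_commutative_subgroupoids m \<theta> \<longleftrightarrow>
     (\<forall>c \<in> UNIV // \<theta>. (\<forall>x\<in>c. \<forall>y\<in>c. m x y \<in> c \<and> m x y = m y x))"

definition in_CG_o_S :: "('a \<Rightarrow> 'a \<Rightarrow> 'a) \<Rightarrow> bool" where
  "in_CG_o_S m \<longleftrightarrow> (\<exists>\<theta>. groupoid_congruence m \<theta> \<and> quotient_is_semilattice m \<theta>
                         \<and> classes_commutative_subgroupoids m \<theta>)"

end

theory Submission
  imports Defs
begin

text \<open>Modulo \<theta> we have x = zx \<equiv> xz = yz \<equiv> zy = y, since the quotient is commutative; so x and y
  lie in a single \<theta>-class, and that class is a commutative subgroupoid.\<close>

lemma related_if_common_left_unit_and_equal_right_products:
  assumes "equiv UNIV \<theta>"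
    and commutative_mod: "\<And>a b. (m a b, m b a) \<in> \<theta>"
    and "m z x = x" "m z y = y" "m x z = m y z"
  shows "(x, y) \<in> \<theta>"
proof -
  have "(x, m x z) \<in> \<theta>" using commutative_mod[of z x] \<open>m z x = x\<close> by simp
  moreover have "(m y z, y) \<in> \<theta>" using commutative_mod[of y z] \<open>m z y = y\<close> by simp
  ultimately show ?thesis
    using \<open>m x z = m y z\<close> \<open>equiv UNIV \<theta>\<close> by (metis equivE transD)
qed

lemma commute_if_related:
  assumes "equiv UNIV \<theta>" "classes_commutative_subgroupoids m \<theta>" "(x, y) \<in> \<theta>"
  shows "m x y = m y x"
proof -
  have "\<theta> `` {x} \<in> UNIV // \<theta>" by (rule quotientI) simp
  moreover have "x \<in> \<theta> `` {x}" using \<open>equiv UNIV \<theta>\<close> by (blast dest: equiv_class_self)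
  moreover have "y \<in> \<theta> `` {x}" using \<open>(x, y) \<in> \<theta>\<close> by simp
  ultimately show ?thesis
    using \<open>classes_commutative_subgroupoids m \<theta>\<close>
    unfolding classes_commutative_subgroupoids_def by blast
qed

theorem proposition4p14:
  fixes m :: "'a \<Rightarrow> 'a \<Rightarrow> 'a"
  assumes "in_CG_o_S m"
  shows "\<forall>x y z. m z x = x \<and> m z y = y \<and> m x z = m y z \<longrightarrow> m x y = m y x"
proof (intro allI impI)
  fix x y z
  assume "m z x = x \<and> m z y = y \<and> m x z = m y z"
  obtain \<theta> where congruence: "groupoid_congruence m \<theta>"
    and semilattice: "quotient_is_semilattice m \<theta>"
    and classes: "classes_commutative_subgroupoids m \<theta>"
    using assms unfolding in_CG_o_S_def by blast
  have equiv: "equiv UNIV \<theta>"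
    using congruence unfolding groupoid_congruence_def by blast
  have "\<And>a b. (m a b, m b a) \<in> \<theta>"
    using semilattice unfolding quotient_is_semilattice_def by blast
  then have "(x, y) \<in> \<theta>"
    using equiv \<open>m z x = x \<and> m z y = y \<and> m x z = m y z\<close>
    by (blast intro: related_if_common_left_unit_and_equal_right_products)
  then show "m x y = m y x" using equiv classes by (blast intro: commute_if_related)
qed

end
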